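(* Let $f(x):=x^n+a_1x^{n-1}+a_2x^{n-2}+\cdots+a_n$ be a real polynomial, and set $a_0:=1$. Suppose $f$ has (counting multiplicities) $n_+$ roots with positive real part, $n_-$ roots with negative real part and $n_0<n$ purely imaginary roots (roots with zero real part), so $n_++n_-+n_0=n$. Let \[ P(x):=\sum_{j\ge 0,\ 2j\le n}(-1)^j a_{2j}\,x^{n-2j}=x^n-a_2x^{n-2}+a_4x^{n-4}-\cdots, \] \[ Q(x):=\sum_{j\ge 0,\ 2j+1\le n}(-1)^j a_{2j+1}\,x^{n-2j-1}=a_1x^{n-1}-a_3x^{n-3}+a_5x^{n-5}-\cdots, \] and $d:=n-2\min(n_+,n_-)$. Then, counting multiplicities, there exist at least $d$ real roots $\mu_1,\ldots,\mu_d$ of $P$ and at least $d-1$ real roots $\nu_1,\ldots,\nu_{d-1}$ of $Q$ such that \[ \mu_1\le\nu_1\le\mu_2\le\nu_2\le\cdots\le\nu_{d-1}\le\mu_d . \] If $n_0=0$, then these inequalities may be taken to be strict.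
   Context: "Counting multiplicities" means that a root of multiplicity $m$ may appear up to $m$ times in the respective list. *)

theory Defs
  imports "HOL-Computational_Algebra.Polynomial" "HOL-Library.Multiset" Complex_Main
begin

definition roots_count :: "(real \<Rightarrow> bool) \<Rightarrow> real poly \<Rightarrow> nat" where
  "roots_count R f =
     (\<Sum>z\<in>{z. poly (map_poly complex_of_real f) z = 0 \<and> R (Re z)}.
        order z (map_poly complex_of_real f))"

abbreviation n_pos :: "real poly \<Rightarrow> nat" where "n_pos f \<equiv> roots_count (\<lambda>r. r > 0) f"
abbreviation n_neg :: "real poly \<Rightarrow> nat" where "n_neg f \<equiv> roots_count (\<lambda>r. r < 0) f"
abbreviation n_zero :: "real poly \<Rightarrow> nat" where "n_zero f \<equiv> roots_count (\<lambda>r. r = 0) f"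

text \<open>With \<open>a_j = coeff f (n - j)\<close>, \<open>n = degree f\<close>:
  \<open>P x = \<Sum>_{2j\<le>n} (-1)^j a_{2j} x^{n-2j}\<close>, \<open>Q x = \<Sum>_{2j+1\<le>n} (-1)^j a_{2j+1} x^{n-2j-1}\<close>.\<close>
definition P_poly :: "real poly \<Rightarrow> real poly" where
  "P_poly f = (let n = degree f in
     (\<Sum>j\<in>{j. 2*j \<le> n}. monom ((-1)^j * coeff f (n - 2*j)) (n - 2*j)))"

definition Q_poly :: "real poly \<Rightarrow> real poly" where
  "Q_poly f = (let n = degree f in
     (\<Sum>j\<in>{j. 2*j + 1 \<le> n}. monom ((-1)^j * coeff f (n - 2*j - 1)) (n - 2*j - 1)))"

text \<open>The list \<open>xs\<close> consists of roots of \<open>p\<close>, counted with multiplicity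
  (for the zero polynomial every real number is a root of arbitrary multiplicity).\<close>
definition roots_with_mult :: "real list \<Rightarrow> real poly \<Rightarrow> bool" where
  "roots_with_mult xs p \<longleftrightarrow> p = 0 \<or> (\<forall>x. count (mset xs) x \<le> order x p)"

end

theory Submission
  imports Defs "HOL-Computational_Algebra.Fundamental_Theorem_Algebra" "HOL-Real_Asymp.Real_Asymp"
begin

text \<open>Over \<open>\<complex>\<close>, \<open>P(x) - \<i> Q(x) = (-\<i>)\<^sup>n f(\<i> x) = \<Prod>\<^sub>w (x + \<i> w)\<close>, the product running
  over the roots \<open>w\<close> of \<open>f\<close>. A purely imaginary root \<open>w\<close> contributes the real factor \<open>x - Im w\<close>,
  common to \<open>P\<close> and \<open>Q\<close>. Along the real line, the argument of the product over the remaining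
  roots varies continuously from \<open>(n\<^sub>+ - n\<^sub>-) \<pi>\<close> at \<open>-\<infinity>\<close> to \<open>0\<close> at \<open>+\<infinity>\<close>, so it passes
  through the \<open>2D - 1\<close> intermediate multiples of \<open>\<pi>/2\<close>, where \<open>D = |n\<^sub>+ - n\<^sub>-|\<close>. There the
  product is alternately purely imaginary and real, which gives strictly interlacing zeros of the
  cofactors of \<open>P\<close> and \<open>Q\<close>. Inserting every root of the common factor twice into this sorted
  list keeps the interlacing and yields \<open>d = n\<^sub>0 + D\<close> roots of \<open>P\<close> and \<open>d - 1\<close> roots of \<open>Q\<close>.\<close>

fun evens :: "'a list \<Rightarrow> 'a list" and odds :: "'a list \<Rightarrow> 'a list" where
  "evens [] = []"
| "evens (x # xs) = x # odds xs"
| "odds [] = []"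
| "odds (x # xs) = evens xs"

lemma length_evens_odds:
  "length (evens xs) = (length xs + 1) div 2 \<and> length (odds xs) = length xs div 2"
  by (induction xs) auto

lemma nth_evens_odds:
  "(\<forall>i < length (evens xs). evens xs ! i = xs ! (2 * i)) \<and>
   (\<forall>i < length (odds xs). odds xs ! i = xs ! (2 * i + 1))"
proof (induction xs)
  case (Cons x xs)
  show ?case
  proof (intro conjI allI impI)
    fix i assume "i < length (evens (x # xs))"
    then show "evens (x # xs) ! i = (x # xs) ! (2 * i)" using Cons by (cases i) auto
  next
    fix i assume "i < length (odds (x # xs))"
    then show "odds (x # xs) ! i = (x # xs) ! (2 * i + 1)" using Cons by (cases i) auto
  qed
qed simp

lemma distinct_evens_odds: "distinct xs \<Longrightarrow> distinct (evens xs) \<and> distinct (odds xs)"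
proof (induction xs)
  case (Cons x xs)
  have "set (evens xs) \<subseteq> set xs \<and> set (odds xs) \<subseteq> set xs"
    by (induction xs) auto
  with Cons show ?case by auto
qed simp

lemma mset_evens_odds_append_pair:
  "mset (evens (ys @ x # x # zs)) = mset (evens (ys @ zs)) + {#x#} \<and>
   mset (odds (ys @ x # x # zs)) = mset (odds (ys @ zs)) + {#x#}"
  by (induction ys) auto

lemma sorted_wrt_evens_odds_interlace:
  assumes "sorted_wrt R xs" "length xs = 2 * d - 1" "i < d - 1"
  shows "R (evens xs ! i) (odds xs ! i) \<and> R (odds xs ! i) (evens xs ! (i + 1))"
proof -
  have "evens xs ! i = xs ! (2 * i)" "odds xs ! i = xs ! (2 * i + 1)"
    "evens xs ! (i + 1) = xs ! (2 * i + 2)"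
    using nth_evens_odds[of xs] length_evens_odds[of xs] assms(2,3) by auto
  then show ?thesis
    using sorted_wrt_nth_less[OF assms(1)] assms(2,3) by auto
qed

lemma insort_insort_split: "\<exists>ys zs. xs = ys @ zs \<and> insort x (insort x xs) = ys @ x # x # zs"
proof (induction xs)
  case (Cons y xs)
  then obtain ys zs where "xs = ys @ zs" "insort x (insort x xs) = ys @ x # x # zs"
    by blast
  then show ?case
    by (cases "x \<le> y") (auto intro: exI[of _ "[]"] exI[of _ "y # ys"])
qed simp

lemma sorted_insert_pairs:
  fixes xs :: "'a :: linorder list"
  assumes "sorted xs"
  shows "\<exists>ys. sorted ys \<and> length ys = length xs + 2 * size T \<and>
    mset (evens ys) = mset (evens xs) + T \<and> mset (odds ys) = mset (odds xs) + T"
proof (induction T)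
  case empty
  show ?case using assms by auto
next
  case (add x T)
  then obtain ys where ys: "sorted ys" "length ys = length xs + 2 * size T"
    "mset (evens ys) = mset (evens xs) + T" "mset (odds ys) = mset (odds xs) + T"
    by blast
  obtain as bs where split: "ys = as @ bs" "insort x (insort x ys) = as @ x # x # bs"
    using insort_insort_split by blast
  have "mset (evens (insort x (insort x ys))) = mset (evens ys) + {#x#} \<and>
      mset (odds (insort x (insort x ys))) = mset (odds ys) + {#x#}"
    using mset_evens_odds_append_pair[of as x bs] unfolding split(2) by (simp add: split(1))
  then show ?case
    using ys by (intro exI[of _ "insort x (insort x ys)"]) (simp add: sorted_insort)
qed

lemma roots_with_mult_Nil [simp]: "roots_with_mult [] p"
  by (simp add: roots_with_mult_def)

lemma roots_with_mult_mult:
  fixes r p :: "real poly"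
  assumes "distinct ys" "\<forall>y\<in>set ys. poly p y = 0" "mset xs \<subseteq># mset ys + proots r"
  shows "roots_with_mult xs (r * p)"
proof (cases "r = 0 \<or> p = 0")
  case False
  have "mset ys \<subseteq># proots p"
  proof (rule mset_subset_eqI)
    fix y
    show "count (mset ys) y \<le> count (proots p) y"
      using assms(1,2) False distinct_count_atmost_1[of ys] order_gt_0_iff[of p y]
      by (cases "y \<in> set ys") (auto simp: count_eq_zero_iff)
  qed
  then have "mset xs \<subseteq># proots (r * p)"
    using assms(3) False by (simp add: proots_mult subset_mset.order_trans add.commute)
  then show ?thesis
    unfolding roots_with_mult_def using False mset_subset_eq_count[of "mset xs"]
    by (metis count_proots mult_eq_0_iff)
qed (auto simp: roots_with_mult_def)

definition alternating_zeros :: "real poly \<Rightarrow> real poly \<Rightarrow> real list \<Rightarrow> bool" where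
  "alternating_zeros P Q L \<longleftrightarrow> sorted_wrt (<) L \<and>
     (\<forall>i<length L. (even i \<longrightarrow> poly P (L ! i) = 0) \<and> (odd i \<longrightarrow> poly Q (L ! i) = 0))"

lemma sorted_roots_list_of_common_factor:
  fixes P Q R P1 Q1 :: "real poly"
  assumes PR: "P = R * P1" and QR: "Q = R * Q1" and n0: "size (proots R) = n0"
    and L1: "alternating_zeros P1 Q1 L1" "length L1 = 2 * D - 1" and d: "d = n0 + D"
  obtains L where "sorted L" "length L = 2 * d - 1" "roots_with_mult (evens L) P"
    "roots_with_mult (odds L) Q" "n0 = 0 \<longrightarrow> sorted_wrt (<) L"
proof (cases "D = 0")
  case D: True
  show ?thesis
  proof (cases "proots R")
    case empty
    then show ?thesis using that[of "[]"] n0 d D by simp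
  next
    case (add t T)
    obtain L where L: "sorted L" "length L = 1 + 2 * size T"
      "mset (evens L) = {#t#} + T" "mset (odds L) = T"
      using sorted_insert_pairs[of "[t]" T] by auto
    show ?thesis
    proof (rule that)
      show "roots_with_mult (evens L) P" "roots_with_mult (odds L) Q"
        unfolding PR QR using L(3,4) add by (auto intro: roots_with_mult_mult[of "[]"])
    qed (use L add n0 d D in auto)
  qed
next
  case False
  have sorted: "sorted_wrt (<) L1" using L1(1) by (simp add: alternating_zeros_def)
  have roots: "\<forall>y\<in>set (evens L1). poly P1 y = 0" "\<forall>y\<in>set (odds L1). poly Q1 y = 0"
    using L1(1) nth_evens_odds[of L1] length_evens_odds[of L1]
    by (auto simp: alternating_zeros_def in_set_conv_nth)
  have distinct: "distinct (evens L1)" "distinct (odds L1)"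
    using distinct_evens_odds sorted strict_sorted_iff by blast+
  obtain L where L: "sorted L" "length L = length L1 + 2 * n0"
    "mset (evens L) = mset (evens L1) + proots R" "mset (odds L) = mset (odds L1) + proots R"
    "n0 = 0 \<longrightarrow> L = L1"
    using sorted_insert_pairs[of L1 "proots R"] sorted strict_sorted_iff n0
    by (cases "n0 = 0") auto
  show ?thesis
  proof (rule that)
    show "roots_with_mult (evens L) P" "roots_with_mult (odds L) Q"
      unfolding PR QR using L(3,4)
      by (auto intro: roots_with_mult_mult[OF distinct(1) roots(1)] roots_with_mult_mult[OF distinct(2) roots(2)])
    show "length L = 2 * d - 1" using L(2) L1(2) d False by simp
  qed (use L sorted in auto)
qed

lemma interlaced_roots_of_common_factor:
  fixes P Q R P1 Q1 :: "real poly"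
  assumes "P = R * P1" "Q = R * Q1" "size (proots R) = n0"
    and "alternating_zeros P1 Q1 L1" "length L1 = 2 * D - 1" "d = n0 + D"
  shows "\<exists>\<mu> \<nu> :: real list. length \<mu> = d \<and> length \<nu> = d - 1 \<and>
           roots_with_mult \<mu> P \<and> roots_with_mult \<nu> Q \<and>
           (\<forall>i < d - 1. \<mu> ! i \<le> \<nu> ! i \<and> \<nu> ! i \<le> \<mu> ! (i + 1)) \<and>
           (n0 = 0 \<longrightarrow> (\<forall>i < d - 1. \<mu> ! i < \<nu> ! i \<and> \<nu> ! i < \<mu> ! (i + 1)))"
proof -
  obtain L where L: "sorted L" "length L = 2 * d - 1" "roots_with_mult (evens L) P"
    "roots_with_mult (odds L) Q" "n0 = 0 \<longrightarrow> sorted_wrt (<) L"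
    using sorted_roots_list_of_common_factor[OF assms] by blast
  show ?thesis
  proof (intro exI conjI)
    show "length (evens L) = d" "length (odds L) = d - 1"
      using length_evens_odds[of L] L(2) by auto
    show "\<forall>i < d - 1. evens L ! i \<le> odds L ! i \<and> odds L ! i \<le> evens L ! (i + 1)"
      using sorted_wrt_evens_odds_interlace[of "(\<le>)" L] L(1,2) by simp
    show "n0 = 0 \<longrightarrow> (\<forall>i < d - 1. evens L ! i < odds L ! i \<and> odds L ! i < evens L ! (i + 1))"
      using sorted_wrt_evens_odds_interlace[of "(<)" L] L(2,5) by simp
  qed (use L in auto)
qed

lemma continuous_attains_sorted_values_above:
  fixes f :: "real \<Rightarrow> real"
  assumes cont: "continuous_on UNIV f" and top: "(f \<longlongrightarrow> b) at_top"
    and "sorted_wrt (<) cs" "\<forall>c\<in>set cs. f x0 < c \<and> c < b"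
  shows "\<exists>xs. length xs = length cs \<and> sorted_wrt (<) xs \<and> (\<forall>x\<in>set xs. x0 < x) \<and>
    (\<forall>j<length cs. f (xs ! j) = cs ! j)"
  using assms(3,4)
proof (induction cs arbitrary: x0)
  case (Cons c cs)
  have c: "f x0 < c" "c < b" using Cons.prems by auto
  have "eventually (\<lambda>x. c < f x \<and> x0 < x) at_top"
    using order_tendstoD(1)[OF top c(2)] eventually_gt_at_top by (rule eventually_conj)
  then obtain x1 where x1: "c < f x1" "x0 < x1" using eventually_happens by fastforce
  obtain x where x: "x0 \<le> x" "x \<le> x1" "f x = c"
    using IVT'[of f x0 c x1] c x1 continuous_on_subset[OF cont] by force
  then have "x0 < x" using c(1) by (cases "x = x0") auto
  moreover obtain xs where "length xs = length cs" "sorted_wrt (<) xs" "\<forall>y\<in>set xs. x < y"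
    "\<forall>j<length cs. f (xs ! j) = cs ! j"
    using Cons.IH[of x] Cons.prems x(3) by auto
  ultimately show ?case
    using x(3) by (intro exI[of _ "x # xs"]) (auto simp: nth_Cons split: nat.split)
qed simp

lemma continuous_attains_sorted_values:
  fixes f :: "real \<Rightarrow> real"
  assumes "continuous_on UNIV f" "(f \<longlongrightarrow> a) at_bot" "(f \<longlongrightarrow> b) at_top"
    and "sorted_wrt (<) cs" "\<forall>c\<in>set cs. a < c \<and> c < b"
  shows "\<exists>xs. length xs = length cs \<and> sorted_wrt (<) xs \<and> (\<forall>j<length cs. f (xs ! j) = cs ! j)"
proof -
  have "eventually (\<lambda>x. \<forall>c\<in>set cs. f x < c) at_bot"
    using assms(5) order_tendstoD(2)[OF assms(2)] by (simp add: eventually_ball_finite)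
  then obtain x0 where "\<forall>c\<in>set cs. f x0 < c" using eventually_happens by fastforce
  then show ?thesis
    using continuous_attains_sorted_values_above[OF assms(1,3,4)] assms(5) by blast
qed

text \<open>A continuous branch of the argument of \<open>x + \<i> w\<close> for real \<open>x\<close>, provided \<open>Re w \<noteq> 0\<close>.\<close>
definition arg_along :: "complex \<Rightarrow> real \<Rightarrow> real" where
  "arg_along w x = sgn (Re w) * pi / 2 - arctan ((x - Im w) / Re w)"

lemma polar_arg_along:
  assumes "Re w \<noteq> 0"
  shows "complex_of_real x + \<i> * w =
    complex_of_real (cmod (complex_of_real x + \<i> * w)) * cis (arg_along w x)"
proof -
  define t where "t = (x - Im w) / Re w"
  have x: "x - Im w = Re w * t" using assms unfolding t_def by simp
  have "cmod (complex_of_real x + \<i> * w) = sqrt ((Re w * t)\<^sup>2 + (Re w)\<^sup>2)"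
    unfolding cmod_def x[symmetric] by simp
  also have "\<dots> = \<bar>Re w\<bar> * sqrt (1 + t\<^sup>2)"
    by (simp add: power_mult_distrib algebra_simps flip: real_sqrt_mult real_sqrt_abs)
  finally have norm: "cmod (complex_of_real x + \<i> * w) = \<bar>Re w\<bar> * sqrt (1 + t\<^sup>2)" .
  have sqrt: "sqrt (1 + t\<^sup>2) > 0" by (simp add: add_pos_nonneg)
  show ?thesis
  proof (cases "Re w > 0")
    case True
    then have "arg_along w x = pi / 2 - arctan t" unfolding arg_along_def t_def by simp
    then show ?thesis
      using True sqrt unfolding complex_eq_iff norm
      by (simp add: x cos_diff sin_diff sin_arctan cos_arctan)
  next
    case False
    then have "arg_along w x = - (pi / 2) - arctan t" "Re w < 0"
      using assms unfolding arg_along_def t_def by auto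
    then show ?thesis
      using sqrt unfolding complex_eq_iff norm
      by (simp add: x cos_diff sin_diff sin_arctan cos_arctan)
  qed
qed

lemma prod_mset_polar_arg_along:
  assumes "\<forall>w\<in>#B. Re w \<noteq> 0"
  shows "(\<Prod>w\<in>#B. complex_of_real x + \<i> * w) =
    complex_of_real (\<Prod>w\<in>#B. cmod (complex_of_real x + \<i> * w)) * cis (\<Sum>w\<in>#B. arg_along w x)"
  using assms
proof (induction B)
  case (add w B)
  then show ?case
    by (simp add: polar_arg_along[of w x, symmetric] flip: cis_mult)
qed simp

lemma continuous_on_sum_arg_along:
  assumes "\<forall>w\<in>#B. Re w \<noteq> 0"
  shows "continuous_on UNIV (\<lambda>x. \<Sum>w\<in>#B. arg_along w x)"
  using assms
  by (induction B) (auto simp: arg_along_def intro!: continuous_intros)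

lemma arg_along_limits:
  assumes "Re w \<noteq> 0"
  shows "(arg_along w \<longlongrightarrow> 0) at_top" "(arg_along w \<longlongrightarrow> sgn (Re w) * pi) at_bot"
proof -
  have "Re w > 0 \<or> Re w < 0" using assms by linarith
  then show "(arg_along w \<longlongrightarrow> 0) at_top" "(arg_along w \<longlongrightarrow> sgn (Re w) * pi) at_bot"
    unfolding arg_along_def by (elim disjE; simp; real_asymp)+
qed

lemma sum_arg_along_limits:
  assumes "\<forall>w\<in>#B. Re w \<noteq> 0"
  shows "((\<lambda>x. \<Sum>w\<in>#B. arg_along w x) \<longlongrightarrow> 0) at_top"
    "((\<lambda>x. \<Sum>w\<in>#B. arg_along w x) \<longlongrightarrow> (\<Sum>w\<in>#B. sgn (Re w)) * pi) at_bot"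
proof -
  have "((\<lambda>x. \<Sum>w\<in>#B. arg_along w x) \<longlongrightarrow> 0) at_top \<and>
    ((\<lambda>x. \<Sum>w\<in>#B. arg_along w x) \<longlongrightarrow> (\<Sum>w\<in>#B. sgn (Re w)) * pi) at_bot"
    using assms
  proof (induction B)
    case (add w B)
    then have "Re w \<noteq> 0" by simp
    with add show ?case
      using tendsto_add[OF arg_along_limits(1)] tendsto_add[OF arg_along_limits(2)]
      by (simp add: distrib_right)
  qed simp
  then show "((\<lambda>x. \<Sum>w\<in>#B. arg_along w x) \<longlongrightarrow> 0) at_top"
    "((\<lambda>x. \<Sum>w\<in>#B. arg_along w x) \<longlongrightarrow> (\<Sum>w\<in>#B. sgn (Re w)) * pi) at_bot"
    by auto
qed

lemma sum_mset_sgn: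
  "(\<Sum>w\<in>#B. sgn (Re w)) =
    real (size (filter_mset (\<lambda>w. 0 < Re w) B)) - real (size (filter_mset (\<lambda>w. Re w < 0) B))"
  by (induction B) (auto simp: sgn_if)

lemma continuous_attains_half_pi_multiples:
  fixes \<Phi> :: "real \<Rightarrow> real"
  assumes "continuous_on UNIV \<Phi>" "(\<Phi> \<longlongrightarrow> - (real D * pi)) at_bot" "(\<Phi> \<longlongrightarrow> 0) at_top"
  shows "\<exists>L. length L = 2 * D - 1 \<and> sorted_wrt (<) L \<and>
    (\<forall>i<length L. \<Phi> (L ! i) = of_int (int i + 1 - 2 * int D) * (pi / 2))"
proof -
  define cs where "cs = map (\<lambda>j. of_int (int j + 1 - 2 * int D) * (pi / 2)) [0..<2 * D - 1]"
  have "sorted_wrt (<) cs"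
    unfolding cs_def sorted_wrt_iff_nth_less by (auto simp: divide_strict_right_mono)
  moreover have "\<forall>c\<in>set cs. - (real D * pi) < c \<and> c < 0"
  proof
    fix c assume "c \<in> set cs"
    then obtain j where j: "j < 2 * D - 1" "c = (real j + 1 - 2 * real D) * (pi / 2)"
      unfolding cs_def by auto
    have "real (j + 1) < real (2 * D)"
      unfolding of_nat_less_iff using j(1) by linarith
    then have "0 < (real j + 1) * pi" "(real j + 1) * pi < (2 * real D) * pi"
      by (simp_all add: add_pos_nonneg)
    moreover have "c = (real j + 1) * pi / 2 - real D * pi"
      unfolding j(2) by (simp add: algebra_simps)
    ultimately show "- (real D * pi) < c \<and> c < 0" by linarith
  qed
  ultimately obtain L where "length L = length cs" "sorted_wrt (<) L"
    "\<forall>i<length cs. \<Phi> (L ! i) = cs ! i"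
    using continuous_attains_sorted_values[OF assms] by blast
  then show ?thesis
    unfolding cs_def by (intro exI[of _ L]) simp
qed

lemma alternating_zeros_Re_Im_prod:
  fixes B :: "complex multiset"
  defines "m \<equiv> size (filter_mset (\<lambda>w. 0 < Re w) B)" and "k \<equiv> size (filter_mset (\<lambda>w. Re w < 0) B)"
  assumes nonzero: "\<forall>w\<in>#B. Re w \<noteq> 0"
  obtains L where "length L = 2 * (max m k - min m k) - 1" "sorted_wrt (<) L"
    "\<And>i. i < length L \<Longrightarrow> even i \<Longrightarrow> Re (\<Prod>w\<in>#B. complex_of_real (L ! i) + \<i> * w) = 0"
    "\<And>i. i < length L \<Longrightarrow> odd i \<Longrightarrow> Im (\<Prod>w\<in>#B. complex_of_real (L ! i) + \<i> * w) = 0"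
proof -
  define D where "D = max m k - min m k"
  define \<Theta> where "\<Theta> x = (\<Sum>w\<in>#B. arg_along w x)" for x
  \<comment> \<open>\<open>s\<close> orients the argument \<open>\<Theta>\<close> so that \<open>s \<Theta>\<close> increases from \<open>-D \<pi>\<close> to \<open>0\<close>.\<close>
  define s :: real where "s = (if m \<le> k then 1 else -1)"
  have "s * ((\<Sum>w\<in>#B. sgn (Re w)) * pi) = - (real D * pi)"
    unfolding sum_mset_sgn s_def D_def m_def k_def by (auto simp: of_nat_diff algebra_simps)
  then have "((\<lambda>x. s * \<Theta> x) \<longlongrightarrow> - (real D * pi)) at_bot" "((\<lambda>x. s * \<Theta> x) \<longlongrightarrow> 0) at_top"
    using sum_arg_along_limits[OF nonzero] tendsto_mult_left[of _ _ _ s]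
    unfolding \<Theta>_def by fastforce+
  moreover have "continuous_on UNIV (\<lambda>x. s * \<Theta> x)"
    unfolding \<Theta>_def by (intro continuous_intros continuous_on_sum_arg_along nonzero)
  ultimately obtain L where L: "length L = 2 * D - 1" "sorted_wrt (<) L"
    "\<forall>i<length L. s * \<Theta> (L ! i) = of_int (int i + 1 - 2 * int D) * (pi / 2)"
    using continuous_attains_half_pi_multiples by blast
  have cos_sin: "cos (\<Theta> x) = cos (s * \<Theta> x)" "sin (\<Theta> x) = s * sin (s * \<Theta> x)" for x
    unfolding s_def by auto
  have polar: "(\<Prod>w\<in>#B. complex_of_real x + \<i> * w) =
      complex_of_real (\<Prod>w\<in>#B. cmod (complex_of_real x + \<i> * w)) * cis (\<Theta> x)" for x
    unfolding \<Theta>_def by (rule prod_mset_polar_arg_along[OF nonzero])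
  show ?thesis
  proof (rule that[of L])
    fix i assume "i < length L"
    with L(3) have \<Theta>: "s * \<Theta> (L ! i) = of_int (int i + 1 - 2 * int D) * (pi / 2)" by blast
    show "Re (\<Prod>w\<in>#B. complex_of_real (L ! i) + \<i> * w) = 0" if "even i"
    proof -
      have "odd (int i + 1 - 2 * int D)" using that by simp
      then have "cos (s * \<Theta> (L ! i)) = 0" unfolding \<Theta> cos_zero_iff_int by blast
      then show ?thesis unfolding polar by (simp add: cos_sin)
    qed
    show "Im (\<Prod>w\<in>#B. complex_of_real (L ! i) + \<i> * w) = 0" if "odd i"
    proof -
      have "even (int i + 1 - 2 * int D)" using that by simp
      then have "sin (s * \<Theta> (L ! i)) = 0" unfolding \<Theta> sin_zero_iff_int by blast
      then show ?thesis unfolding polar by (simp add: cos_sin)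
    qed
  qed (use L D_def in auto)
qed

lemma sum_atMost_split_parity:
  fixes g :: "nat \<Rightarrow> 'a::comm_monoid_add"
  shows "(\<Sum>l\<le>n. g l) = (\<Sum>j\<in>{j. 2 * j \<le> n}. g (2 * j)) + (\<Sum>j\<in>{j. 2 * j + 1 \<le> n}. g (2 * j + 1))"
proof -
  have U: "{..n} = (\<lambda>j. 2 * j) ` {j. 2 * j \<le> n} \<union> (\<lambda>j. 2 * j + 1) ` {j. 2 * j + 1 \<le> n}"
  proof (intro set_eqI iffI)
    fix l assume l: "l \<in> {..n}"
    show "l \<in> (\<lambda>j. 2 * j) ` {j. 2 * j \<le> n} \<union> (\<lambda>j. 2 * j + 1) ` {j. 2 * j + 1 \<le> n}"
    proof (cases "even l")
      case True then obtain j where "l = 2 * j" by blast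
      with l show ?thesis by auto
    next
      case False then obtain j where "l = 2 * j + 1" using oddE by blast
      with l show ?thesis by auto
    qed
  qed auto
  have "(\<lambda>j. 2 * j) ` {j. 2 * j \<le> n} \<inter> (\<lambda>j. 2 * j + 1) ` {j. 2 * j + 1 \<le> n} = {}"
    by auto presburger
  moreover have "finite {j. 2 * j \<le> n}" "finite {j. 2 * j + 1 \<le> n}"
    by (auto intro: finite_subset[of _ "{..n}"])
  ultimately show ?thesis
    unfolding U by (simp add: sum.union_disjoint sum.reindex inj_on_def)
qed

lemma P_minus_i_Q_poly:
  fixes f :: "real poly"
  shows "complex_of_real (poly (P_poly f) x) - \<i> * complex_of_real (poly (Q_poly f) x) =
    (-\<i>) ^ degree f * poly (map_poly complex_of_real f) (\<i> * complex_of_real x)"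
proof -
  define n where "n = degree f"
  define c where "c k = complex_of_real (coeff f k)" for k
  have "(-\<i>) ^ n * poly (map_poly complex_of_real f) (\<i> * complex_of_real x) =
      (\<Sum>k\<le>n. c k * ((-\<i>) ^ n * (\<i> * complex_of_real x) ^ k))"
    unfolding poly_altdef c_def n_def
    by (simp add: degree_map_poly coeff_map_poly sum_distrib_left mult_ac)
  also have "\<dots> = (\<Sum>k\<le>n. c k * (-\<i>) ^ (n - k) * complex_of_real x ^ k)"
  proof (intro sum.cong refl)
    fix k assume "k \<in> {..n}"
    then have "(-\<i>) ^ n = (-\<i>) ^ (n - k) * (-\<i>) ^ k" by (simp flip: power_add)
    moreover have "(-\<i>) ^ k * \<i> ^ k = 1" by (simp flip: power_mult_distrib)
    ultimately show "c k * ((-\<i>) ^ n * (\<i> * complex_of_real x) ^ k) =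
        c k * (-\<i>) ^ (n - k) * complex_of_real x ^ k"
      by (simp add: power_mult_distrib mult_ac)
  qed
  also have "\<dots> = (\<Sum>l\<le>n. c (n - l) * (-\<i>) ^ l * complex_of_real x ^ (n - l))"
    unfolding atMost_atLeast0 by (subst sum.atLeastAtMost_rev) (intro sum.cong refl; simp)
  also have "\<dots> = (\<Sum>j\<in>{j. 2 * j \<le> n}. complex_of_real ((-1) ^ j * coeff f (n - 2 * j) * x ^ (n - 2 * j))) -
      \<i> * (\<Sum>j\<in>{j. 2 * j + 1 \<le> n}. complex_of_real ((-1) ^ j * coeff f (n - 2 * j - 1) * x ^ (n - 2 * j - 1)))"
  proof -
    have "(-\<i>) ^ (2 * j) = (-1) ^ j" "(-\<i>) ^ (2 * j + 1) = - \<i> * (-1) ^ j" for j :: nat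
      by (simp_all add: power_mult)
    then show ?thesis
      unfolding sum_atMost_split_parity c_def sum_distrib_left
      by (simp add: sum_negf[symmetric] mult_ac)
  qed
  finally show ?thesis
    unfolding P_poly_def Q_poly_def Let_def n_def poly_sum poly_monom by simp
qed

lemma poly_map_poly_Re: "poly (map_poly Re p) x = Re (poly p (complex_of_real x))"
  by (induction p) (auto simp: map_poly_pCons)

lemma poly_map_poly_uminus_Im: "poly (map_poly (\<lambda>c. - Im c) p) x = - Im (poly p (complex_of_real x))"
  by (induction p) (auto simp: map_poly_pCons algebra_simps)

lemma proots_prod_mset_linear:
  fixes T :: "'a :: idom multiset"
  shows "proots (\<Prod>t\<in>#T. [:- t, 1:]) = T"
proof (induction T)
  case (add t T)
  have "(\<Prod>t\<in>#T. [:- t, 1:]) \<noteq> 0" by auto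
  then show ?case
    using add proots_mult[of "[:- t, 1:]" "\<Prod>t\<in>#T. [:- t, 1:]"] by simp
qed simp

lemma poly_linear_factors_at_i_times:
  "(-\<i>) ^ size W * poly (\<Prod>w\<in>#W. [:- w, 1:]) (\<i> * y) = (\<Prod>w\<in>#W. y + \<i> * w)"
  by (induction W) (auto simp: algebra_simps)

lemma P_Q_poly_factorization:
  fixes f :: "real poly" and A B :: "complex multiset"
  assumes monic: "lead_coeff f = 1" and roots: "proots (map_poly complex_of_real f) = A + B"
    and imaginary: "\<forall>w\<in>#A. Re w = 0"
  defines "R \<equiv> \<Prod>t\<in>#image_mset Im A. [:- t, 1:]" and "G \<equiv> \<Prod>w\<in>#B. [:\<i> * w, 1:]"
  shows "P_poly f = R * map_poly Re G" "Q_poly f = R * map_poly (\<lambda>c. - Im c) G"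
proof -
  let ?F = "map_poly complex_of_real f"
  have F: "?F = (\<Prod>w\<in>#A + B. [:- w, 1:])"
    using complex_poly_decompose_multiset[of ?F] monic roots
    by (simp add: degree_map_poly coeff_map_poly)
  have size: "size (A + B) = degree f"
    using size_proots_complex[of ?F] roots by (simp add: degree_map_poly)
  have A: "(\<Prod>w\<in>#A. complex_of_real x + \<i> * w) = complex_of_real (poly R x)" for x
    unfolding R_def poly_prod_mset using imaginary
    by (induction A) (auto simp: complex_eq_iff)
  have PQ: "complex_of_real (poly (P_poly f) x) - \<i> * complex_of_real (poly (Q_poly f) x) =
      complex_of_real (poly R x) * poly G (complex_of_real x)" for x
  proof -
    have "complex_of_real (poly (P_poly f) x) - \<i> * complex_of_real (poly (Q_poly f) x) =
        (-\<i>) ^ size (A + B) * poly (\<Prod>w\<in>#A + B. [:- w, 1:]) (\<i> * complex_of_real x)"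
      by (simp only: P_minus_i_Q_poly size flip: F)
    also have "\<dots> = (\<Prod>w\<in>#A + B. complex_of_real x + \<i> * w)"
      by (rule poly_linear_factors_at_i_times)
    also have "\<dots> = complex_of_real (poly R x) * poly G (complex_of_real x)"
      unfolding G_def poly_prod_mset by (simp add: A add.commute)
    finally show ?thesis .
  qed
  show "P_poly f = R * map_poly Re G"
    by (rule poly_ext) (use arg_cong[OF PQ, of Re] in \<open>simp add: poly_map_poly_Re\<close>)
  show "Q_poly f = R * map_poly (\<lambda>c. - Im c) G"
    by (rule poly_ext) (use arg_cong[OF PQ, of "\<lambda>z. - Im z"] in \<open>simp add: poly_map_poly_uminus_Im\<close>)
qed

lemma roots_count_conv_proots:
  assumes "f \<noteq> 0"
  shows "roots_count R f = size (filter_mset (\<lambda>w. R (Re w)) (proots (map_poly complex_of_real f)))"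
proof -
  let ?F = "map_poly complex_of_real f"
  have F: "?F \<noteq> 0" using assms by (auto simp: poly_eq_iff coeff_map_poly)
  have "size (filter_mset (\<lambda>w. R (Re w)) (proots ?F)) =
      (\<Sum>z\<in>set_mset (filter_mset (\<lambda>w. R (Re w)) (proots ?F)). count (proots ?F) z)"
    by (simp add: size_multiset_overloaded_eq)
  also have "set_mset (filter_mset (\<lambda>w. R (Re w)) (proots ?F)) = {z. poly ?F z = 0 \<and> R (Re z)}"
    using F by auto
  finally show ?thesis
    unfolding roots_count_def using F by simp
qed

lemma size_filter_mset_trichotomy:
  fixes f :: "'a \<Rightarrow> 'b :: linorder"
  shows "size M = size {#x \<in># M. f x = c#} + size {#x \<in># M. c < f x#} + size {#x \<in># M. f x < c#}"
  by (induction M) auto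

lemma degree_eq_roots_counts:
  fixes f :: "real poly"
  assumes "f \<noteq> 0"
  shows "degree f = n_zero f + n_pos f + n_neg f"
proof -
  have "degree f = size (proots (map_poly complex_of_real f))"
    using size_proots_complex[of "map_poly complex_of_real f"] by (simp add: degree_map_poly)
  then show ?thesis
    using size_filter_mset_trichotomy[of "proots (map_poly complex_of_real f)" Re 0]
    unfolding roots_count_conv_proots[OF assms] by linarith
qed

lemma P_Q_poly_common_factor:
  fixes f :: "real poly"
  assumes monic: "lead_coeff f = 1"
  obtains R P1 Q1 L1 where "P_poly f = R * P1" "Q_poly f = R * Q1" "size (proots R) = n_zero f"
    "alternating_zeros P1 Q1 L1"
    "length L1 = 2 * (max (n_pos f) (n_neg f) - min (n_pos f) (n_neg f)) - 1"
proof -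
  let ?F = "map_poly complex_of_real f"
  define A where "A = {#w \<in># proots ?F. Re w = 0#}"
  define B where "B = {#w \<in># proots ?F. Re w \<noteq> 0#}"
  define R where "R = (\<Prod>t\<in>#image_mset Im A. [:- t, 1:])"
  define G where "G = (\<Prod>w\<in>#B. [:\<i> * w, 1:])"
  have f: "f \<noteq> 0" using monic by auto
  have "proots ?F = A + B" unfolding A_def B_def by (rule multiset_partition)
  moreover have "\<forall>w\<in>#A. Re w = 0" by (simp add: A_def)
  ultimately have PQ: "P_poly f = R * map_poly Re G" "Q_poly f = R * map_poly (\<lambda>c. - Im c) G"
    unfolding R_def G_def by (rule P_Q_poly_factorization[OF monic])+
  have R: "size (proots R) = n_zero f"
    unfolding R_def proots_prod_mset_linear A_def roots_count_conv_proots[OF f] by simp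
  have B: "{#w \<in># B. 0 < Re w#} = {#w \<in># proots ?F. 0 < Re w#}"
    "{#w \<in># B. Re w < 0#} = {#w \<in># proots ?F. Re w < 0#}"
    unfolding B_def filter_filter_mset by (rule filter_mset_cong0; auto)+
  have nonzero: "\<forall>w\<in>#B. Re w \<noteq> 0" by (simp add: B_def)
  obtain L1 where L1: "length L1 = 2 * (max (n_pos f) (n_neg f) - min (n_pos f) (n_neg f)) - 1"
    "sorted_wrt (<) L1"
    "\<And>i. i < length L1 \<Longrightarrow> even i \<Longrightarrow> Re (\<Prod>w\<in>#B. complex_of_real (L1 ! i) + \<i> * w) = 0"
    "\<And>i. i < length L1 \<Longrightarrow> odd i \<Longrightarrow> Im (\<Prod>w\<in>#B. complex_of_real (L1 ! i) + \<i> * w) = 0"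
    using alternating_zeros_Re_Im_prod[OF nonzero] unfolding B roots_count_conv_proots[OF f] by blast
  have G: "poly G (complex_of_real x) = (\<Prod>w\<in>#B. complex_of_real x + \<i> * w)" for x
    unfolding G_def poly_prod_mset by (simp add: add.commute)
  have "alternating_zeros (map_poly Re G) (map_poly (\<lambda>c. - Im c) G) L1"
    unfolding alternating_zeros_def poly_map_poly_Re poly_map_poly_uminus_Im G using L1 by simp
  from PQ R this L1(1) show ?thesis by (rule that)
qed

theorem corollary3p3:
  fixes f :: "real poly"
  assumes monic: "lead_coeff f = 1"
    and n0_lt: "n_zero f < degree f"
  defines "d \<equiv> degree f - 2 * min (n_pos f) (n_neg f)"
  shows "\<exists>\<mu> \<nu> :: real list.
           length \<mu> = d \<and> length \<nu> = d - 1 \<and>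
           roots_with_mult \<mu> (P_poly f) \<and> roots_with_mult \<nu> (Q_poly f) \<and>
           (\<forall>i < d - 1. \<mu> ! i \<le> \<nu> ! i \<and> \<nu> ! i \<le> \<mu> ! (i + 1)) \<and>
           (n_zero f = 0 \<longrightarrow> (\<forall>i < d - 1. \<mu> ! i < \<nu> ! i \<and> \<nu> ! i < \<mu> ! (i + 1)))"
proof -
  obtain R P1 Q1 L1 where PQ: "P_poly f = R * P1" "Q_poly f = R * Q1" "size (proots R) = n_zero f"
    and L1: "alternating_zeros P1 Q1 L1"
      "length L1 = 2 * (max (n_pos f) (n_neg f) - min (n_pos f) (n_neg f)) - 1"
    using P_Q_poly_common_factor[OF monic] by blast
  have "degree f = n_zero f + n_pos f + n_neg f"
    using monic by (intro degree_eq_roots_counts) auto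
  then have "d = n_zero f + (max (n_pos f) (n_neg f) - min (n_pos f) (n_neg f))"
    unfolding d_def by (cases "n_pos f \<le> n_neg f") (simp_all add: min_def max_def)
  then show ?thesis
    by (rule interlaced_roots_of_common_factor[OF PQ L1])
qed

end
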